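(* Let $p$ be a prime and $r \in \mathbb{N}$ with $r\ge 2$. Let $k \in \mathbb{N}$ and let $m \in \mathbb{N}$ such that $r(p-1)+1< 2p^m$. Then \[\mathsf{D}_k(C_p^r)\le \min \{(k(r-1)+1)p - r+1,\ (k-1)p^m + r(p-1)+1\}.\]
   Context: $C_p^r$ is the elementary abelian $p$-group of rank $r$. A sequence over a finite abelian group $G$ is a finite unordered list of elements with repetitions; zero-sum means its terms sum to $0$. $\mathsf{D}_k(G)$ is the smallest $\ell$ such that every sequence over $G$ of length at least $\ell$ has $k$ disjoint non-empty zero-sum subsequences. *)

theory Defs
  imports Main "HOL-Library.Multiset" "HOL-Computational_Algebra.Primes"
begin

text \<open>The elementary abelian group C_p^r, realised as Z_p^r: vectors
  f :: nat => nat with f i < p for i < r and f i = 0 for i >= r;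
  the group operation is coordinatewise addition modulo p.\<close>
definition elem_ab :: "nat \<Rightarrow> nat \<Rightarrow> (nat \<Rightarrow> nat) set" where
  "elem_ab p r = {f. (\<forall>i<r. f i < p) \<and> (\<forall>i\<ge>r. f i = 0)}"

definition zero_sum :: "nat \<Rightarrow> nat \<Rightarrow> (nat \<Rightarrow> nat) multiset \<Rightarrow> bool" where
  "zero_sum p r S \<longleftrightarrow> (\<forall>i<r. (\<Sum>x\<in>#S. x i) mod p = 0)"

definition has_k_disjoint_zs :: "nat \<Rightarrow> nat \<Rightarrow> nat \<Rightarrow> (nat \<Rightarrow> nat) multiset \<Rightarrow> bool" where
  "has_k_disjoint_zs p r k S \<longleftrightarrow>
     (\<exists>T :: nat \<Rightarrow> (nat \<Rightarrow> nat) multiset.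
        (\<Sum>j<k. T j) \<subseteq># S \<and> (\<forall>j<k. T j \<noteq> {#} \<and> zero_sum p r (T j)))"

definition Dk :: "nat \<Rightarrow> nat \<Rightarrow> nat \<Rightarrow> nat" where
  "Dk k p r = (LEAST l. \<forall>S. set_mset S \<subseteq> elem_ab p r \<and> size S \<ge> l \<longrightarrow> has_k_disjoint_zs p r k S)"

end

theory Submission
  imports Defs "HOL-Number_Theory.Residues"
begin

text \<open>First, a polynomial-method strengthening of Olson's theorem: among any
  \<open>r (p - 1) + q\<close> elements of \<open>C_p^r\<close>, \<open>q = p ^ j\<close>, some non-empty subfamily sums to zero
  and has a multiple of \<open>q\<close> elements. Writing \<open>\<sigma>\<^sub>i(T)\<close> for the \<open>i\<close>-th coordinate sum of a
  subfamily \<open>T\<close>, the set function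
  \<open>F(T) = (\<Prod>i<r. 1 - \<sigma>\<^sub>i(T) ^ (p - 1)) * (\<Sum>l<q. (-1) ^ l * (card T choose l))\<close>
  is a polynomial of degree \<open>< r (p - 1) + q\<close> in the indicator variables of \<open>T\<close>, so its
  alternating sum over all subfamilies vanishes. But \<open>F({}) = 1\<close>, while for any other \<open>T\<close>
  either Fermat's little theorem kills the first factor mod \<open>p\<close>, or \<open>T\<close> is zero-sum and then
  \<open>\<not> q dvd card T\<close> forces \<open>p\<close> to divide the second factor \<open>\<plusminus>(card T - 1 choose q - 1)\<close>.

  Second, a greedy count. Suppose every multiple of \<open>q\<close> in \<open>(c, r (p - 1) + q]\<close> lies in
  \<open>[r (p - 1) + 2, 2 c]\<close>. A zero-sum subsequence \<open>T\<close> as above then either has length at most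
  \<open>c\<close>, or has length at most \<open>2 c\<close> but at least \<open>r (p - 1) + 2\<close>, in which case Olson's bound
  applied to \<open>T\<close> minus one term splits it into two zero-sum blocks. Either way every \<open>c\<close> terms
  pay for one block, so \<open>r (p - 1) + 1 + (k - 1) c\<close> terms yield \<open>k\<close> disjoint blocks. The
  choices \<open>(q, c) = (p, (r - 1) p)\<close> and \<open>(q, c) = (p ^ m, p ^ m)\<close> give the two bounds.\<close>

text \<open>\<open>low_degree d f\<close>: \<open>f\<close> is a linear combination of the monomials \<open>T \<mapsto> [V \<subseteq> T]\<close> with
  \<open>card V \<le> d\<close>, i.e.\ a polynomial of degree at most \<open>d\<close> in the indicator variables of \<open>T\<close>.\<close>
inductive low_degree :: "nat \<Rightarrow> ('a set \<Rightarrow> 'b::comm_ring_1) \<Rightarrow> bool" for d where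
  indicator: "finite V \<Longrightarrow> card V \<le> d \<Longrightarrow> low_degree d (\<lambda>T. if V \<subseteq> T then c else 0)"
| add: "low_degree d f \<Longrightarrow> low_degree d g \<Longrightarrow> low_degree d (\<lambda>T. f T + g T)"

lemma low_degree_const: "low_degree d (\<lambda>T. c)"
  using low_degree.indicator[of "{}" d c] by simp

lemma low_degree_indicator_mult:
  assumes "low_degree e g" "finite V" "card V \<le> d"
  shows "low_degree (d + e) (\<lambda>T. (if V \<subseteq> T then c else 0) * g T)"
  using assms(1)
proof (induction rule: low_degree.induct)
  case (indicator W c')
  have "(\<lambda>T. (if V \<subseteq> T then c else 0) * (if W \<subseteq> T then c' else 0))
      = (\<lambda>T. if V \<union> W \<subseteq> T then c * c' else 0)"
    by auto
  moreover have "card (V \<union> W) \<le> d + e"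
    using card_Un_le[of V W] indicator assms by linarith
  ultimately show ?case
    using indicator assms by (metis finite_Un low_degree.indicator)
next
  case (add f g)
  then show ?case by (simp add: distrib_left low_degree.add)
qed

lemma low_degree_mult:
  assumes "low_degree d f" "low_degree e g"
  shows "low_degree (d + e) (\<lambda>T. f T * g T)"
  using assms(1)
proof (induction rule: low_degree.induct)
  case (indicator V c)
  then show ?case using low_degree_indicator_mult[OF assms(2)] by blast
next
  case (add f h)
  then show ?case by (simp add: distrib_right low_degree.add)
qed

lemma low_degree_scale: "low_degree d f \<Longrightarrow> low_degree d (\<lambda>T. c * f T)"
  using low_degree_mult[OF low_degree_const[of 0 c]] by simp

lemma low_degree_diff: "low_degree d f \<Longrightarrow> low_degree d g \<Longrightarrow> low_degree d (\<lambda>T. f T - g T)"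
  using low_degree.add[of d f "\<lambda>T. (-1) * g T"] low_degree_scale[of d g "-1"] by simp

lemma low_degree_sum:
  "finite I \<Longrightarrow> (\<And>i. i \<in> I \<Longrightarrow> low_degree d (f i)) \<Longrightarrow> low_degree d (\<lambda>T. \<Sum>i\<in>I. f i T)"
  by (induction I rule: finite_induct) (auto intro: low_degree_const low_degree.add)

lemma low_degree_prod:
  "(\<And>i. i < n \<Longrightarrow> low_degree d (f i)) \<Longrightarrow> low_degree (n * d) (\<lambda>T. \<Prod>i<n. f i T)"
proof (induction n)
  case 0
  then show ?case using low_degree_const by simp
next
  case (Suc n)
  then have "low_degree (n * d + d) (\<lambda>T. (\<Prod>i<n. f i T) * f n T)"
    by (simp add: low_degree_mult)
  then show ?case by (simp add: add.commute mult.commute)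
qed

lemma low_degree_power: "low_degree d f \<Longrightarrow> low_degree (n * d) (\<lambda>T. f T ^ n)"
  using low_degree_prod[of n d "\<lambda>_. f"] by simp

lemma low_degree_sum_over_Int:
  assumes "finite U"
  shows "low_degree 1 (\<lambda>T. \<Sum>t\<in>U \<inter> T. c t)"
proof -
  have "(\<lambda>T. \<Sum>t\<in>U \<inter> T. c t) = (\<lambda>T. \<Sum>t\<in>U. if {t} \<subseteq> T then c t else 0)"
    using assms by (simp add: sum.inter_restrict)
  moreover have "low_degree 1 (\<lambda>T. \<Sum>t\<in>U. if {t} \<subseteq> T then c t else 0)"
    using assms by (intro low_degree_sum low_degree.indicator) auto
  ultimately show ?thesis by simp
qed

lemma low_degree_card_Int_choose:
  assumes "finite U" "j \<le> d"
  shows "low_degree d (\<lambda>T. of_nat (card (U \<inter> T) choose j))"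
proof -
  have "card (U \<inter> T) choose j = card {W. W \<subseteq> U \<inter> T \<and> card W = j}" for T
    using n_subsets[of "U \<inter> T" j] assms(1) by simp
  also have "card {W. W \<subseteq> U \<inter> T \<and> card W = j}
      = card {W \<in> {W. W \<subseteq> U \<and> card W = j}. W \<subseteq> T}" for T
    by (rule arg_cong[where f = card]) blast
  finally have "(\<lambda>T. of_nat (card (U \<inter> T) choose j))
      = (\<lambda>T. \<Sum>W\<in>{W. W \<subseteq> U \<and> card W = j}. if W \<subseteq> T then 1 else 0 :: 'b)"
    using assms(1) by (simp add: sum.inter_filter[symmetric] del: of_nat_sum)
  moreover have "low_degree d (\<lambda>T. \<Sum>W\<in>{W. W \<subseteq> U \<and> card W = j}. if W \<subseteq> T then 1 else 0 :: 'b)"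
    using assms by (intro low_degree_sum low_degree.indicator) (auto intro: finite_subset)
  ultimately show ?thesis by simp
qed

lemma low_degree_alternating_sum_eq_0:
  assumes "low_degree d f" "finite U" "d < card U"
  shows "(\<Sum>T\<in>Pow U. (-1) ^ card T * f T) = 0"
  using assms(1)
proof (induction rule: low_degree.induct)
  case (indicator V c)
  have "(\<Sum>T\<in>Pow U. (-1) ^ card T * (if V \<subseteq> T then c else 0))
      = (\<Sum>T | T \<subseteq> U \<and> V \<subseteq> T. (-1) ^ card T) * c"
    using assms(2) by (simp add: sum_distrib_right, intro sum.mono_neutral_cong_right) auto
  also have "\<dots> = 0"
  proof (cases "V \<subseteq> U")
    case True
    then have "V \<subset> U" using indicator assms(3) by auto
    then show ?thesis
      using assms(2) by (simp add: sum_alternating_cancels card_subsupersets_even_odd)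
  next
    case False
    then have "{T. T \<subseteq> U \<and> V \<subseteq> T} = {}" by auto
    then show ?thesis by (simp only: sum.empty mult_zero_left)
  qed
  finally show ?case .
next
  case (add f g)
  then show ?case by (simp add: distrib_left sum.distrib)
qed

lemma low_degree_dvd_at_empty:
  assumes "low_degree d f" "finite U" "d < card U"
    and "\<And>T. T \<subseteq> U \<Longrightarrow> T \<noteq> {} \<Longrightarrow> a dvd f T"
  shows "a dvd f {}"
proof -
  have "f {} + (\<Sum>T\<in>Pow U - {{}}. (-1) ^ card T * f T) = 0"
    using low_degree_alternating_sum_eq_0[OF assms(1-3)] assms(2)
    by (simp add: sum.remove[of "Pow U" "{}"])
  moreover have "a dvd (\<Sum>T\<in>Pow U - {{}}. (-1) ^ card T * f T)"
    using assms(4) by (intro dvd_sum dvd_mult) auto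
  ultimately show ?thesis
    by (metis add_eq_0_iff dvd_minus_iff)
qed

lemma choose_alternating_partial_sum:
  "(\<Sum>j<Suc k. (-1) ^ j * int (Suc n choose j)) = (-1) ^ k * int (n choose k)"
proof (induction k)
  case (Suc k)
  have "(\<Sum>j<Suc (Suc k). (-1) ^ j * int (Suc n choose j))
      = (-1) ^ k * int (n choose k) + (-1) ^ Suc k * int (Suc n choose Suc k)"
    using Suc by simp
  also have "\<dots> = (-1) ^ Suc k * int (n choose Suc k)"
    by (simp add: algebra_simps)
  finally show ?case .
qed simp

lemma prime_dvd_choose_pred:
  assumes "prime p" "0 < n" "\<not> p ^ j dvd n"
  shows "p dvd (n - 1 choose (p ^ j - 1))"
proof (rule ccontr)
  assume "\<not> p dvd (n - 1 choose (p ^ j - 1))"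
  then have "coprime p (n - 1 choose (p ^ j - 1))"
    using assms(1) by (simp add: prime_imp_coprime)
  then have coprime: "coprime (p ^ j) (n - 1 choose (p ^ j - 1))"
    by simp
  have "0 < p ^ j" using assms(1) prime_gt_0_nat by simp
  then have "n * (n - 1 choose (p ^ j - 1)) = (n choose p ^ j) * p ^ j"
    using Suc_times_binomial_eq[of "n - 1" "p ^ j - 1"] assms(2) by simp
  then have "p ^ j dvd n * (n - 1 choose (p ^ j - 1))" by simp
  then show False
    using coprime assms(3) coprime_dvd_mult_left_iff by blast
qed

lemma prime_dvd_alternating_choose_sum:
  assumes "prime p" "0 < n" "\<not> p ^ j dvd n"
  shows "int p dvd (\<Sum>l<p ^ j. (-1) ^ l * int (n choose l))"
proof -
  obtain i where i: "p ^ j = Suc i"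
    using assms(1) prime_gt_0_nat gr0_implies_Suc zero_less_power by metis
  obtain m where m: "n = Suc m"
    using assms(2) gr0_implies_Suc by blast
  have "p dvd (m choose i)"
    using prime_dvd_choose_pred[OF assms] i m by simp
  then show ?thesis
    unfolding i m choose_alternating_partial_sum by simp
qed

lemma prime_dvd_one_minus_power:
  assumes "prime p" "\<not> p dvd a"
  shows "int p dvd 1 - int a ^ (p - 1)"
proof -
  have "[int a ^ (p - 1) = 1] (mod int p)"
    using fermat_theorem[OF assms] by (metis cong_int_iff of_nat_1 of_nat_power)
  then have "int p dvd int a ^ (p - 1) - 1"
    by (simp add: cong_iff_dvd_diff)
  then show ?thesis
    by (simp only: dvd_diff_commute)
qed

lemma exists_zero_sum_subset_card_dvd:
  fixes a :: "'i \<Rightarrow> nat \<Rightarrow> nat"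
  assumes p: "prime p" and "finite U" and "r * (p - 1) + p ^ j \<le> card U"
  shows "\<exists>T\<subseteq>U. T \<noteq> {} \<and> (\<forall>i<r. p dvd (\<Sum>t\<in>T. a t i)) \<and> p ^ j dvd card T"
proof (rule ccontr)
  assume none: "\<not> ?thesis"
  have "0 < p ^ j" "2 \<le> p" using p prime_gt_0_nat prime_ge_2_nat by auto
  define F :: "'i set \<Rightarrow> int" where
    "F T = (\<Prod>i<r. 1 - (\<Sum>t\<in>U \<inter> T. int (a t i)) ^ (p - 1))
         * (\<Sum>l<p ^ j. (-1) ^ l * of_nat (card (U \<inter> T) choose l))" for T
  have "low_degree (r * ((p - 1) * 1))
      (\<lambda>T. \<Prod>i<r. 1 - (\<Sum>t\<in>U \<inter> T. int (a t i)) ^ (p - 1))"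
    using \<open>finite U\<close>
    by (intro low_degree_prod low_degree_diff[OF low_degree_const] low_degree_power
        low_degree_sum_over_Int)
  moreover have "low_degree (p ^ j - 1)
      (\<lambda>T. \<Sum>l<p ^ j. (-1) ^ l * of_nat (card (U \<inter> T) choose l) :: int)"
    using \<open>finite U\<close>
    by (intro low_degree_sum low_degree_scale low_degree_card_Int_choose) auto
  ultimately have deg: "low_degree (r * ((p - 1) * 1) + (p ^ j - 1)) F"
    unfolding F_def by (rule low_degree_mult)
  have dvd: "int p dvd F T" if T: "T \<subseteq> U" "T \<noteq> {}" for T
  proof (cases "\<forall>i<r. p dvd (\<Sum>t\<in>T. a t i)")
    case True
    then have "\<not> p ^ j dvd card T" using none T by blast
    moreover have "0 < card T"
      using T \<open>finite U\<close> by (simp add: card_gt_0_iff finite_subset)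
    ultimately have "int p dvd (\<Sum>l<p ^ j. (-1) ^ l * of_nat (card T choose l))"
      using prime_dvd_alternating_choose_sum[OF p] by blast
    then show ?thesis unfolding F_def Int_absorb1[OF T(1)] by simp
  next
    case False
    then obtain i where i: "i < r" "\<not> p dvd (\<Sum>t\<in>T. a t i)" by blast
    have "int p dvd 1 - (\<Sum>t\<in>U \<inter> T. int (a t i)) ^ (p - 1)"
      using prime_dvd_one_minus_power[OF p i(2)] Int_absorb1[OF T(1)] by simp
    also have "\<dots> dvd (\<Prod>i<r. 1 - (\<Sum>t\<in>U \<inter> T. int (a t i)) ^ (p - 1))"
      using i(1) by (intro dvd_prodI) auto
    finally show ?thesis unfolding F_def by simp
  qed
  have "int p dvd F {}"
    by (rule low_degree_dvd_at_empty[OF deg \<open>finite U\<close> _ dvd])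
      (use assms(3) \<open>0 < p ^ j\<close> in linarith)
  moreover have "F {} = 1"
  proof -
    have "(\<Sum>l<p ^ j. (-1) ^ l * of_nat (card (U \<inter> {}) choose l) :: int)
        = (\<Sum>l<p ^ j. if l = 0 then 1 else 0)"
      by (intro sum.cong) (auto simp: gr0_conv_Suc)
    then show ?thesis
      using \<open>0 < p ^ j\<close> \<open>2 \<le> p\<close> by (simp add: F_def power_0_left)
  qed
  ultimately show False
    using \<open>2 \<le> p\<close> by simp
qed

lemma exists_zero_sum_submset_size_dvd:
  assumes p: "prime p" and size: "r * (p - 1) + p ^ j \<le> size S"
  shows "\<exists>T. T \<subseteq># S \<and> T \<noteq> {#} \<and> zero_sum p r T \<and> p ^ j dvd size T
             \<and> size T \<le> r * (p - 1) + p ^ j"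
proof -
  obtain xs where xs: "mset xs = S" using ex_mset by blast
  obtain I where I: "I \<subseteq> {..<r * (p - 1) + p ^ j}" "I \<noteq> {}"
      "\<forall>i<r. p dvd (\<Sum>t\<in>I. (xs ! t) i)" "p ^ j dvd card I"
    using exists_zero_sum_subset_card_dvd[OF p, of "{..<r * (p - 1) + p ^ j}" r j "\<lambda>t. xs ! t"]
    by auto
  have "finite I" using I(1) finite_subset by blast
  define T where "T = image_mset (nth xs) (mset_set I)"
  have "I \<subseteq> {..<length xs}" using I(1) size xs by auto
  then have "T \<subseteq># image_mset (nth xs) (mset_set {..<length xs})"
    unfolding T_def by (intro image_mset_subseteq_mono subset_imp_msubset_mset_set) auto
  also have "\<dots> = mset (map (nth xs) [0..<length xs])"
    by (simp add: atLeast0LessThan)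
  also have "\<dots> = S"
    using xs by (simp add: map_nth)
  finally have "T \<subseteq># S" .
  moreover have "zero_sum p r T"
    using I(3)
    by (simp add: zero_sum_def T_def sum_unfold_sum_mset[symmetric] multiset.map_comp o_def)
  moreover have "size T = card I" "T \<noteq> {#}"
    using \<open>finite I\<close> I(2) by (simp_all add: T_def mset_set_empty_iff)
  moreover have "card I \<le> r * (p - 1) + p ^ j"
    using card_mono[OF _ I(1)] by simp
  ultimately show ?thesis
    using I(4) by metis
qed

text \<open>The case \<open>j = 0\<close> is Olson's bound \<open>D(C_p^r) \<le> r (p - 1) + 1\<close> on the Davenport constant.\<close>
corollary exists_zero_sum_submset:
  assumes "prime p" "r * (p - 1) + 1 \<le> size S"
  obtains T where "T \<subseteq># S" "T \<noteq> {#}" "zero_sum p r T"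
  using exists_zero_sum_submset_size_dvd[of p r 0 S] assms by auto

lemma zero_sum_diff:
  assumes "zero_sum p r T" "zero_sum p r U" "U \<subseteq># T"
  shows "zero_sum p r (T - U)"
  unfolding zero_sum_def
proof (intro allI impI)
  fix i assume "i < r"
  have "(\<Sum>x\<in>#T. x i) = (\<Sum>x\<in>#U. x i) + (\<Sum>x\<in>#T - U. x i)"
    using assms(3) by (subst subset_mset.add_diff_inverse[symmetric]) simp_all
  moreover have "p dvd (\<Sum>x\<in>#T. x i)" "p dvd (\<Sum>x\<in>#U. x i)"
    using assms(1,2) \<open>i < r\<close> unfolding zero_sum_def by auto
  ultimately show "(\<Sum>x\<in>#T - U. x i) mod p = 0"
    by (simp add: dvd_add_right_iff)
qed

lemma zero_sum_split:
  assumes "prime p" "zero_sum p r T" "r * (p - 1) + 2 \<le> size T"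
  obtains U where "U \<subseteq># T" "U \<noteq> {#}" "T - U \<noteq> {#}"
    and "zero_sum p r U" "zero_sum p r (T - U)"
proof -
  have "T \<noteq> {#}" using assms(3) by auto
  then obtain x where x: "x \<in># T" by blast
  have "r * (p - 1) + 1 \<le> size (T - {#x#})"
    using assms(3) x by (simp add: size_Diff_singleton)
  then obtain U where U: "U \<subseteq># T - {#x#}" "U \<noteq> {#}" "zero_sum p r U"
    using exists_zero_sum_submset[OF assms(1)] by blast
  then have "add_mset x U \<subseteq># T"
    using x by (simp add: insert_subset_eq_iff)
  then have "count U x < count T x"
    using mset_subset_eq_count[of "add_mset x U" T x] by simp
  then have "count (T - U) x \<noteq> 0"
    by simp
  then have "T - U \<noteq> {#}"
    by (metis count_empty)
  moreover have "U \<subseteq># T"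
    using U(1) by (meson diff_subset_eq_self subset_mset.order_trans)
  ultimately show ?thesis
    using that U(2,3) zero_sum_diff[OF assms(2) U(3)] by blast
qed

lemma has_k_disjoint_zs_0: "has_k_disjoint_zs p r 0 S"
  unfolding has_k_disjoint_zs_def by (intro exI[of _ "\<lambda>_. {#}"]) simp

lemma has_k_disjoint_zs_Suc:
  assumes "T \<subseteq># S" "T \<noteq> {#}" "zero_sum p r T" "has_k_disjoint_zs p r k (S - T)"
  shows "has_k_disjoint_zs p r (Suc k) S"
proof -
  obtain Ts where Ts: "(\<Sum>j<k. Ts j) \<subseteq># S - T" "\<forall>j<k. Ts j \<noteq> {#} \<and> zero_sum p r (Ts j)"
    using assms(4) unfolding has_k_disjoint_zs_def by blast
  have "(\<Sum>j<Suc k. (Ts(k := T)) j) = (\<Sum>j<k. Ts j) + T"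
    by (simp add: add.commute)
  also have "\<dots> \<subseteq># S - T + T"
    using Ts(1) by (rule subset_mset.add_right_mono)
  also have "\<dots> = S"
    using assms(1) by (simp add: subset_mset.diff_add)
  finally show ?thesis
    using Ts(2) assms(2,3) unfolding has_k_disjoint_zs_def
    by (intro exI[of _ "Ts(k := T)"]) (auto simp: less_Suc_eq)
qed

lemma has_k_disjoint_zs_Suc_Suc:
  assumes "prime p" "T \<subseteq># S" "zero_sum p r T" "r * (p - 1) + 2 \<le> size T"
    and "has_k_disjoint_zs p r k (S - T)"
  shows "has_k_disjoint_zs p r (Suc (Suc k)) S"
proof -
  obtain U where U: "U \<subseteq># T" "U \<noteq> {#}" "T - U \<noteq> {#}" "zero_sum p r U" "zero_sum p r (T - U)"
    using zero_sum_split[OF assms(1,3,4)] .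
  have "T - U \<subseteq># S - U"
    using assms(2) by (auto simp: subseteq_mset_def intro: diff_le_mono)
  moreover have "S - U - (T - U) = S - T"
    using U(1) by (metis diff_diff_add_mset subset_mset.add_diff_inverse)
  ultimately have "has_k_disjoint_zs p r (Suc k) (S - U)"
    using has_k_disjoint_zs_Suc[of "T - U" "S - U" p r k] U(3,5) assms(5) by simp
  then show ?thesis
    using has_k_disjoint_zs_Suc U(1,2,4) assms(2) subset_mset.order_trans by blast
qed

lemma has_k_disjoint_zs_if_gap:
  assumes p: "prime p" and "p ^ j \<le> c + 1"
    and gap: "\<And>n. p ^ j dvd n \<Longrightarrow> c < n \<Longrightarrow> n \<le> r * (p - 1) + p ^ j
                  \<Longrightarrow> r * (p - 1) + 2 \<le> n \<and> n \<le> 2 * c"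
  shows "r * (p - 1) + 1 + k * c \<le> size S + c \<Longrightarrow> has_k_disjoint_zs p r k S"
proof (induction k arbitrary: S rule: less_induct)
  case (less k)
  consider "k = 0" | "k = 1" | k' where "k = Suc (Suc k')"
    by (metis One_nat_def not0_implies_Suc)
  then show ?case
  proof cases
    case 1
    then show ?thesis by (simp add: has_k_disjoint_zs_0)
  next
    case 2
    then obtain T where "T \<subseteq># S" "T \<noteq> {#}" "zero_sum p r T"
      using exists_zero_sum_submset[OF p, of r S] less.prems by auto
    then show ?thesis
      using has_k_disjoint_zs_Suc[OF _ _ _ has_k_disjoint_zs_0] 2 by simp
  next
    case (3 k')
    then have "r * (p - 1) + p ^ j \<le> size S"
      using less.prems assms(2) by simp
    then obtain T where T: "T \<subseteq># S" "T \<noteq> {#}" "zero_sum p r T" "p ^ j dvd size T"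
        "size T \<le> r * (p - 1) + p ^ j"
      using exists_zero_sum_submset_size_dvd[OF p] by blast
    have size_diff: "size (S - T) = size S - size T"
      using T(1) by (rule size_Diff_submset)
    show ?thesis
    proof (cases "size T \<le> c")
      case True
      then have "has_k_disjoint_zs p r (Suc k') (S - T)"
        using less.IH[of "Suc k'" "S - T"] less.prems 3 size_diff by simp
      then show ?thesis
        using has_k_disjoint_zs_Suc[OF T(1-3)] 3 by simp
    next
      case False
      then have "r * (p - 1) + 2 \<le> size T" "size T \<le> 2 * c"
        using gap[OF T(4) _ T(5)] by simp_all
      moreover have "has_k_disjoint_zs p r k' (S - T)"
        using less.IH[of k' "S - T"] less.prems 3 size_diff \<open>size T \<le> 2 * c\<close> by simp
      ultimately show ?thesis
        using has_k_disjoint_zs_Suc_Suc[OF p T(1,3)] 3 by simp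
    qed
  qed
qed

lemma Dk_leI:
  assumes "\<And>S. l \<le> size S \<Longrightarrow> has_k_disjoint_zs p r k S"
  shows "Dk k p r \<le> l"
  unfolding Dk_def by (rule Least_le) (use assms in blast)

lemma Dk_le_if_gap:
  assumes "prime p" "p ^ j \<le> c + 1"
    and "\<And>n. p ^ j dvd n \<Longrightarrow> c < n \<Longrightarrow> n \<le> r * (p - 1) + p ^ j
              \<Longrightarrow> r * (p - 1) + 2 \<le> n \<and> n \<le> 2 * c"
  shows "Dk k p r \<le> r * (p - 1) + 1 + (k - 1) * c"
proof (rule Dk_leI)
  fix S :: "(nat \<Rightarrow> nat) multiset"
  assume "r * (p - 1) + 1 + (k - 1) * c \<le> size S"
  then have "r * (p - 1) + 1 + k * c \<le> size S + c"
    by (cases k) simp_all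
  then show "has_k_disjoint_zs p r k S"
    using has_k_disjoint_zs_if_gap[OF assms] by blast
qed

lemma Dk_le_via_p:
  assumes p: "prime p" and "2 \<le> r"
  shows "Dk k p r \<le> r * (p - 1) + 1 + (k - 1) * ((r - 1) * p)"
proof (rule Dk_le_if_gap[OF p, of 1])
  obtain p' where p': "p = Suc p'"
    using p prime_gt_0_nat gr0_implies_Suc by blast
  obtain r' where r': "r = Suc (Suc r')"
    using \<open>2 \<le> r\<close> by (metis add_2_eq_Suc le_Suc_ex)
  show "p ^ 1 \<le> (r - 1) * p + 1"
    unfolding r' by simp
  fix n assume n: "p ^ 1 dvd n" "(r - 1) * p < n" "n \<le> r * (p - 1) + p ^ 1"
  obtain a where a: "n = p * a"
    using n(1) unfolding dvd_def by auto
  have "p * (r - 1) < p * a" "p * a < p * (r + 1)"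
    using n a unfolding p' r' by (simp_all add: algebra_simps)
  then have "r - 1 < a" "a < r + 1"
    by (simp_all only: mult_less_cancel1)
  then have "a = r"
    using \<open>2 \<le> r\<close> by linarith
  show "r * (p - 1) + 2 \<le> n \<and> n \<le> 2 * ((r - 1) * p)"
    unfolding a \<open>a = r\<close> unfolding p' r' by (simp add: algebra_simps)
qed

lemma Dk_le_via_prime_power:
  assumes p: "prime p" and small: "r * (p - 1) + 1 < 2 * p ^ m"
  shows "Dk k p r \<le> r * (p - 1) + 1 + (k - 1) * p ^ m"
proof (rule Dk_le_if_gap[OF p, of m])
  fix n assume n: "p ^ m dvd n" "p ^ m < n" "n \<le> r * (p - 1) + p ^ m"
  obtain a where a: "n = p ^ m * a"
    using n(1) unfolding dvd_def by auto
  have "p ^ m * 1 < p ^ m * a" "p ^ m * a < p ^ m * 3"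
    using n a small by linarith+
  then have "1 < a" "a < 3"
    by (simp_all only: mult_less_cancel1)
  then have "a = 2"
    by linarith
  then show "r * (p - 1) + 2 \<le> n \<and> n \<le> 2 * p ^ m"
    using a small by simp
qed simp

theorem proposition3p5:
  fixes p r k m :: nat
  assumes "prime p" and "r \<ge> 2" and "k \<ge> 1"
    and "r * (p - 1) + 1 < 2 * p ^ m"
  shows "int (Dk k p r) \<le> min ((int k * (int r - 1) + 1) * int p - int r + 1)
                               ((int k - 1) * int p ^ m + int r * (int p - 1) + 1)"
proof -
  obtain p' where p': "p = Suc p'"
    using assms(1) prime_gt_0_nat gr0_implies_Suc by blast
  obtain r' where r': "r = Suc r'"
    using assms(2) by (cases r) auto
  obtain k' where k': "k = Suc k'"
    using assms(3) by (cases k) auto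
  have "int (r * (p - 1) + 1 + (k - 1) * ((r - 1) * p))
      = (int k * (int r - 1) + 1) * int p - int r + 1"
    unfolding p' r' k' by (simp add: algebra_simps)
  moreover have "int (r * (p - 1) + 1 + (k - 1) * p ^ m)
      = (int k - 1) * int p ^ m + int r * (int p - 1) + 1"
    unfolding p' r' k' by (simp add: algebra_simps)
  ultimately show ?thesis
    using Dk_le_via_p[OF assms(1,2), of k] Dk_le_via_prime_power[OF assms(1,4), of k] by linarith
qed

end
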